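(* Let $n,k$ be positive integers with $n\ge k$ and let $1\le i\le n-k$. Let $a_{n,k}^{(i)}$ be the coefficient of $z^i$ in $\mathrm{JS}_n^k(z)$. Then $a_{n,k}^{(i)}$ is the number of ordered pairs $(Q_1,Q_2)$ of simply hooked $k$-quasi-permutations of $[n]$ such that $$Q_1^-=Q_2^-,\qquad |Q_1^-|=|Q_2^-|=i,\qquad \mathrm{pr}_y(Q_1)=\mathrm{pr}_y(Q_2).$$
   Context: $\mathrm{JS}_n^k(z)$ is defined by $\mathrm{JS}_0^0(z)=1$, $\mathrm{JS}_n^k(z)=0$ if $k\notin\{1,\dots,n\}$ (for $(n,k)\neq(0,0)$), and $\mathrm{JS}_n^k(z)=\mathrm{JS}_{n-1}^{k-1}(z)+k(k+z)\mathrm{JS}_{n-1}^k(z)$ for $n,k\ge1$. Let $[n]=\{1,\dots,n\}$. A permutation $\sigma$ of $[n]$ is identified with its diagram $\mathcal D(\sigma)=\{(i,\sigma(i)):i\in[n]\}$. For $\alpha=(i,j)\in[n]\times[n]$ put $\mathrm{pr}_x(\alpha)=i$, $\mathrm{pr}_y(\alpha)=j$, and for $Q\subseteq[n]\times[n]$ put $\mathrm{pr}_x(Q)=\{\mathrm{pr}_x(\alpha):\alpha\in Q\}$, $\mathrm{pr}_y(Q)=\{\mathrm{pr}_y(\alpha):\alpha\in Q\}$, $Q^+=\{(i,j)\in Q:i\le j\}$, $Q^-=\{(i,j)\in Q:i\ge j\}$. A simply hooked $k$-quasi-permutation of $[n]$ is a subset $Q\subseteq[n]\times[n]$ such that (i)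 $Q\subseteq\mathcal D(\sigma)$ for some permutation $\sigma$ of $[n]$, and (ii) $|Q|=n-k$ and $\mathrm{pr}_x(Q^-)\cap\mathrm{pr}_y(Q^+)=\emptyset$. *)

theory Defs
  imports "HOL-Computational_Algebra.Polynomial" "HOL-Combinatorics.Permutations"
begin

fun JS :: "nat \<Rightarrow> nat \<Rightarrow> int poly" where
  "JS 0 k = (if k = 0 then 1 else 0)"
| "JS (Suc n) k = (if k = 0 \<or> k > Suc n then 0
     else JS n (k - 1) + smult (int k) ([:int k, 1:] * JS n k))"

definition diagram :: "nat \<Rightarrow> (nat \<Rightarrow> nat) \<Rightarrow> (nat \<times> nat) set" where
  "diagram n \<sigma> = {(i, \<sigma> i) | i. i \<in> {1..n}}"

definition prx :: "(nat \<times> nat) set \<Rightarrow> nat set" where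
  "prx Q = fst ` Q"

definition pry :: "(nat \<times> nat) set \<Rightarrow> nat set" where
  "pry Q = snd ` Q"

definition Qplus :: "(nat \<times> nat) set \<Rightarrow> (nat \<times> nat) set" where
  "Qplus Q = {(i, j) \<in> Q. i \<le> j}"

definition Qminus :: "(nat \<times> nat) set \<Rightarrow> (nat \<times> nat) set" where
  "Qminus Q = {(i, j) \<in> Q. i \<ge> j}"

definition simply_hooked_qperm :: "nat \<Rightarrow> nat \<Rightarrow> (nat \<times> nat) set \<Rightarrow> bool" where
  "simply_hooked_qperm n k Q \<longleftrightarrow>
     (\<exists>\<sigma>. \<sigma> permutes {1..n} \<and> Q \<subseteq> diagram n \<sigma>) \<and>
     card Q = n - k \<and> prx (Qminus Q) \<inter> pry (Qplus Q) = {}"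

end

theory Submission
  imports Defs
begin

text \<open>
  Both sides satisfy \<open>a(n+1,k,i) = a(n,k-1,i) + k\<^sup>2 a(n,k,i) + k a(n,k,i-1)\<close>, the coefficient
  form of the recurrence defining \<open>JS\<close>. A simply hooked quasi-permutation is a partial
  permutation in which no row of a cell of \<open>Q\<^sup>-\<close> is the column of a cell of \<open>Q\<^sup>+\<close>, so the
  largest index \<open>n+1\<close> is never both a row and a column of \<open>Q\<close>. Split the pairs over \<open>[n+1]\<close> by
  how \<open>n+1\<close> occurs in \<open>Q\<^sub>1\<close>. If it does not occur, it does not occur in \<open>Q\<^sub>2\<close> either, and the
  pair is one over \<open>[n]\<close> with one free line less. If it is a column, both sets have a cell of
  \<open>Q\<^sup>+\<close> in that column (their column sets agree); deleting the two cells leaves a pair over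
  \<open>[n]\<close>, and each deleted cell sat in one of the \<open>k\<close> free rows of its set. If it is a row, the
  cell \<open>(n+1, b)\<close> lies in \<open>Q\<^sup>-\<close> and hence in both sets; deleting it lowers \<open>|Q\<^sup>-|\<close> by one, and
  \<open>b\<close> is one of the \<open>k\<close> free columns.
\<close>

lemma bij_betw_extends_to_permutation:
  assumes "finite S" "A \<subseteq> S" "B \<subseteq> S" "bij_betw g A B"
  obtains \<sigma> where "\<sigma> permutes S" "\<And>x. x \<in> A \<Longrightarrow> \<sigma> x = g x"
proof -
  have "card (S - A) = card (S - B)"
    using assms by (simp add: card_Diff_subset bij_betw_same_card finite_subset)
  then obtain h where h: "bij_betw h (S - A) (S - B)"
    using assms(1) finite_same_card_bij by blast
  define \<sigma> where "\<sigma> x = (if x \<in> A then g x else if x \<in> S then h x else x)" for x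
  have "bij_betw \<sigma> A B"
    using assms(4) by (rule bij_betw_cong[THEN iffD1, rotated]) (simp add: \<sigma>_def)
  moreover have "bij_betw \<sigma> (S - A) (S - B)"
    using h by (rule bij_betw_cong[THEN iffD1, rotated]) (simp add: \<sigma>_def)
  ultimately have "bij_betw \<sigma> (A \<union> (S - A)) (B \<union> (S - B))"
    by (rule bij_betw_combine) blast
  then have "bij_betw \<sigma> S S"
    using assms(2,3) by (simp add: Un_Diff_cancel sup.absorb2)
  then have "\<sigma> permutes S"
    by (rule bij_imp_permutes) (use assms(2) in \<open>auto simp: \<sigma>_def\<close>)
  then show thesis by (rule that) (simp add: \<sigma>_def)
qed

lemma card_Diff_inj_image:
  assumes "finite A" "inj_on f Q" "f ` Q \<subseteq> A"
  shows "card (A - f ` Q) = card A - card Q"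
  using assms by (simp add: card_Diff_subset card_image finite_subset)

lemma insert_eq_insert_outside:
  "insert x A = insert y B \<Longrightarrow> x \<notin> A \<union> B \<Longrightarrow> y \<notin> A \<union> B \<Longrightarrow> x = y \<and> A = B"
  by (metis Un_iff insert_ident insert_iff)

lemma card_image_Sigma_const_fibres:
  assumes "inj_on f (Sigma A B)" "finite A" "\<And>a. a \<in> A \<Longrightarrow> finite (B a) \<and> card (B a) = c"
  shows "card (f ` Sigma A B) = c * card A"
proof -
  have "card (f ` Sigma A B) = (\<Sum>a\<in>A. card (B a))"
    using assms by (simp add: card_image card_SigmaI)
  also have "\<dots> = c * card A" using assms(3) by simp
  finally show ?thesis .
qed

lemma Qminus_subset: "Qminus Q \<subseteq> Q"
  unfolding Qminus_def by auto

lemma Qminus_insert: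
  "Qminus (insert p Q) = (if snd p \<le> fst p then insert p (Qminus Q) else Qminus Q)"
  unfolding Qminus_def by (cases p) auto

lemma Qminus_Diff: "Qminus (Q - R) = Qminus Q - R"
  unfolding Qminus_def by auto

lemma pry_insert: "pry (insert p Q) = insert (snd p) (pry Q)"
  unfolding pry_def by simp

lemma pry_Diff_singleton: "inj_on snd Q \<Longrightarrow> p \<in> Q \<Longrightarrow> pry (Q - {p}) = pry Q - {snd p}"
  unfolding pry_def by (simp add: inj_on_image_set_diff)

definition hooked :: "(nat \<times> nat) set \<Rightarrow> bool" where
  "hooked Q \<longleftrightarrow> (\<forall>p\<in>Q. \<forall>q\<in>Q. snd p \<le> fst p \<longrightarrow> fst q \<le> snd q \<longrightarrow> fst p \<noteq> snd q)"

definition hooked_placement :: "nat \<Rightarrow> (nat \<times> nat) set \<Rightarrow> bool" where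
  "hooked_placement n Q \<longleftrightarrow>
     Q \<subseteq> {1..n} \<times> {1..n} \<and> inj_on fst Q \<and> inj_on snd Q \<and> hooked Q"

lemma disjoint_hooks_iff_hooked: "prx (Qminus Q) \<inter> pry (Qplus Q) = {} \<longleftrightarrow> hooked Q"
  unfolding hooked_def prx_def pry_def Qminus_def Qplus_def by fastforce

lemma subset_diagram_iff:
  "(\<exists>\<sigma>. \<sigma> permutes {1..n} \<and> Q \<subseteq> diagram n \<sigma>) \<longleftrightarrow>
     Q \<subseteq> {1..n} \<times> {1..n} \<and> inj_on fst Q \<and> inj_on snd Q"
proof
  assume "\<exists>\<sigma>. \<sigma> permutes {1..n} \<and> Q \<subseteq> diagram n \<sigma>"
  then obtain \<sigma> where \<sigma>: "\<sigma> permutes {1..n}" and Q: "Q \<subseteq> diagram n \<sigma>" by blast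
  have graph: "fst p \<in> {1..n} \<and> snd p = \<sigma> (fst p)" if "p \<in> Q" for p
    using Q that unfolding diagram_def by auto
  show "Q \<subseteq> {1..n} \<times> {1..n} \<and> inj_on fst Q \<and> inj_on snd Q"
  proof (intro conjI)
    show "Q \<subseteq> {1..n} \<times> {1..n}"
      using graph permutes_in_image[OF \<sigma>] by (simp add: subset_iff mem_Times_iff)
    show "inj_on fst Q"
    proof (rule inj_onI)
      fix p q assume "p \<in> Q" "q \<in> Q" "fst p = fst q"
      then show "p = q" using graph by (simp add: prod_eq_iff)
    qed
    show "inj_on snd Q"
    proof (rule inj_onI)
      fix p q assume "p \<in> Q" "q \<in> Q" "snd p = snd q"
      then have "fst p = fst q" using graph permutes_inj[OF \<sigma>] by (metis injD)
      then show "p = q" using \<open>snd p = snd q\<close> by (simp add: prod_eq_iff)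
    qed
  qed
next
  assume Q: "Q \<subseteq> {1..n} \<times> {1..n} \<and> inj_on fst Q \<and> inj_on snd Q"
  define g where "g = snd \<circ> inv_into Q fst"
  have "bij_betw (inv_into Q fst) (fst ` Q) Q"
    using Q by (intro bij_betw_inv_into) (simp add: inj_on_imp_bij_betw)
  moreover have "bij_betw snd Q (snd ` Q)" using Q by (simp add: inj_on_imp_bij_betw)
  ultimately have g: "bij_betw g (fst ` Q) (snd ` Q)" unfolding g_def by (rule bij_betw_trans)
  have "fst ` Q \<subseteq> {1..n}" "snd ` Q \<subseteq> {1..n}" using Q by auto
  then obtain \<sigma> where \<sigma>: "\<sigma> permutes {1..n}" and \<sigma>g: "\<And>x. x \<in> fst ` Q \<Longrightarrow> \<sigma> x = g x"
    using bij_betw_extends_to_permutation[OF finite_atLeastAtMost _ _ g] by blast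
  have "Q \<subseteq> diagram n \<sigma>"
  proof
    fix p assume p: "p \<in> Q"
    have "\<sigma> (fst p) = snd p" using \<sigma>g[of "fst p"] inv_into_f_f[of fst Q p] Q p by (simp add: g_def)
    then have "p = (fst p, \<sigma> (fst p))" by simp
    moreover have "fst p \<in> {1..n}" using p Q by auto
    ultimately show "p \<in> diagram n \<sigma>" unfolding diagram_def by blast
  qed
  with \<sigma> show "\<exists>\<sigma>. \<sigma> permutes {1..n} \<and> Q \<subseteq> diagram n \<sigma>" by blast
qed

lemma simply_hooked_qperm_iff:
  "k \<le> n \<Longrightarrow> simply_hooked_qperm n k Q \<longleftrightarrow> hooked_placement n Q \<and> card Q + k = n"
  unfolding simply_hooked_qperm_def hooked_placement_def subset_diagram_iff
    disjoint_hooks_iff_hooked by auto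

lemma hooked_subset: "hooked Q \<Longrightarrow> R \<subseteq> Q \<Longrightarrow> hooked R"
  unfolding hooked_def by blast

lemma hooked_insert:
  "hooked (insert p Q) \<longleftrightarrow> hooked Q \<and> fst p \<noteq> snd p \<and>
     (snd p \<le> fst p \<longrightarrow> (\<forall>q\<in>Q. fst q \<le> snd q \<longrightarrow> fst p \<noteq> snd q)) \<and>
     (fst p \<le> snd p \<longrightarrow> (\<forall>q\<in>Q. snd q \<le> fst q \<longrightarrow> fst q \<noteq> snd p))"
  unfolding hooked_def by auto

lemma hooked_placement_subset: "hooked_placement n Q \<Longrightarrow> R \<subseteq> Q \<Longrightarrow> hooked_placement n R"
  unfolding hooked_placement_def by (meson hooked_subset inj_on_subset order_trans)

lemma hooked_placement_finite: "hooked_placement n Q \<Longrightarrow> finite Q"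
  unfolding hooked_placement_def using finite_subset by blast

lemma hooked_placement_finite_Qminus: "hooked_placement n Q \<Longrightarrow> finite (Qminus Q)"
  by (rule finite_subset[OF Qminus_subset hooked_placement_finite])

lemma hooked_placement_bounds:
  "hooked_placement n Q \<Longrightarrow> (x, y) \<in> Q \<Longrightarrow> x \<in> {1..n} \<and> y \<in> {1..n}"
  unfolding hooked_placement_def by auto

lemma hooked_placement_card_le: "hooked_placement n Q \<Longrightarrow> card Q \<le> n"
  unfolding hooked_placement_def
  using card_mono[of "{1..n}" "fst ` Q"] by (force simp: card_image)

lemma card_free_lines:
  assumes "hooked_placement n Q"
  shows "card ({1..n} - fst ` Q) = n - card Q" "card ({1..n} - snd ` Q) = n - card Q"
proof -
  have "fst ` Q \<subseteq> {1..n}" "snd ` Q \<subseteq> {1..n}" "inj_on fst Q" "inj_on snd Q"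
    using assms unfolding hooked_placement_def by auto
  then show "card ({1..n} - fst ` Q) = n - card Q" "card ({1..n} - snd ` Q) = n - card Q"
    using card_Diff_inj_image[of "{1..n}" fst Q] card_Diff_inj_image[of "{1..n}" snd Q] by simp_all
qed

lemma hooked_placement_Suc_avoiding_iff:
  "hooked_placement (Suc n) Q \<and> Suc n \<notin> fst ` Q \<and> Suc n \<notin> snd ` Q \<longleftrightarrow> hooked_placement n Q"
proof -
  have "Q \<subseteq> {1..Suc n} \<times> {1..Suc n} \<and> Suc n \<notin> fst ` Q \<and> Suc n \<notin> snd ` Q
        \<longleftrightarrow> Q \<subseteq> {1..n} \<times> {1..n}"
    by (fastforce simp: subset_iff le_Suc_eq image_iff)
  then show ?thesis unfolding hooked_placement_def by argo
qed

lemma hooked_placement_not_both_top: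
  assumes "hooked_placement n Q" "(n, b) \<in> Q" "(a, n) \<in> Q"
  shows False
proof -
  have "hooked Q" "a \<le> n" "b \<le> n" using assms unfolding hooked_placement_def by auto
  then show False using assms(2,3) unfolding hooked_def by (metis fst_conv snd_conv)
qed

lemma hooked_placement_remove_top:
  assumes Q: "hooked_placement (Suc n) Q" and p: "p \<in> Q" and top: "fst p = Suc n \<or> snd p = Suc n"
  shows "hooked_placement n (Q - {p})"
proof -
  have inj: "inj_on fst Q" "inj_on snd Q" using Q unfolding hooked_placement_def by auto
  have "Suc n \<notin> fst ` (Q - {p})"
  proof
    assume "Suc n \<in> fst ` (Q - {p})"
    then obtain y where q: "(Suc n, y) \<in> Q" "(Suc n, y) \<noteq> p" by force
    show False
    proof (cases "fst p = Suc n")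
      case True then show False using inj_onD[OF inj(1) _ q(1) p] q(2) by simp
    next
      case False
      then have "(fst p, Suc n) \<in> Q" using top p by (metis prod.collapse)
      then show False using hooked_placement_not_both_top[OF Q q(1)] by blast
    qed
  qed
  moreover have "Suc n \<notin> snd ` (Q - {p})"
  proof
    assume "Suc n \<in> snd ` (Q - {p})"
    then obtain x where q: "(x, Suc n) \<in> Q" "(x, Suc n) \<noteq> p" by force
    show False
    proof (cases "snd p = Suc n")
      case True then show False using inj_onD[OF inj(2) _ q(1) p] q(2) by simp
    next
      case False
      then have "(Suc n, snd p) \<in> Q" using top p by (metis prod.collapse)
      then show False using hooked_placement_not_both_top[OF Q _ q(1)] by blast
    qed
  qed
  ultimately show ?thesis
    using hooked_placement_Suc_avoiding_iff hooked_placement_subset[OF Q] by blast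
qed

lemma hooked_placement_insert_top_column:
  assumes "hooked_placement n Q" "a \<in> {1..n} - fst ` Q"
  shows "hooked_placement (Suc n) (insert (a, Suc n) Q)"
proof -
  note bounds = hooked_placement_bounds[OF assms(1)]
  then have "Suc n \<notin> snd ` Q" by force
  with assms show ?thesis
    unfolding hooked_placement_def
    by (auto simp: inj_on_insert hooked_insert dest: bounds)
qed

lemma hooked_placement_insert_top_row:
  assumes "hooked_placement n Q" "b \<in> {1..n} - snd ` Q"
  shows "hooked_placement (Suc n) (insert (Suc n, b) Q)"
proof -
  note bounds = hooked_placement_bounds[OF assms(1)]
  then have "Suc n \<notin> fst ` Q" by force
  with assms show ?thesis
    unfolding hooked_placement_def
    by (auto simp: inj_on_insert hooked_insert dest: bounds)
qed

lemma hooked_placement_top_column_free: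
  assumes Q: "hooked_placement (Suc n) Q" and a: "(a, Suc n) \<in> Q"
  shows "a \<in> {1..n} - fst ` (Q - {(a, Suc n)})"
proof -
  have "a \<noteq> Suc n" using hooked_placement_not_both_top[OF Q _ a] a by blast
  moreover have "a \<notin> fst ` (Q - {(a, Suc n)})"
    using Q a unfolding hooked_placement_def inj_on_def by force
  ultimately show ?thesis using hooked_placement_bounds[OF Q a] by auto
qed

lemma hooked_placement_top_row_free:
  assumes Q: "hooked_placement (Suc n) Q" and b: "(Suc n, b) \<in> Q"
  shows "b \<in> {1..n} - snd ` (Q - {(Suc n, b)})"
proof -
  have "b \<noteq> Suc n" using hooked_placement_not_both_top[OF Q b] b by blast
  moreover have "b \<notin> snd ` (Q - {(Suc n, b)})"
    using Q b unfolding hooked_placement_def inj_on_def by force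
  ultimately show ?thesis using hooked_placement_bounds[OF Q b] by auto
qed

lemma hooked_placement_top_row_in_Qminus:
  "hooked_placement m Q \<Longrightarrow> (m, b) \<in> Qminus Q \<longleftrightarrow> (m, b) \<in> Q"
  using hooked_placement_bounds by (auto simp: Qminus_def)

lemma hooked_placement_insert_outside_inj:
  assumes "hooked_placement n Q" "hooked_placement n R" "insert x Q = insert y R"
    and "x \<notin> {1..n} \<times> {1..n}" "y \<notin> {1..n} \<times> {1..n}"
  shows "x = y \<and> Q = R"
proof -
  have "Q \<union> R \<subseteq> {1..n} \<times> {1..n}" using assms(1,2) unfolding hooked_placement_def by simp
  then show ?thesis using insert_eq_insert_outside[OF assms(3)] assms(4,5) by blast
qed

definition hooked_pairs :: "nat \<Rightarrow> nat \<Rightarrow> nat \<Rightarrow> ((nat \<times> nat) set \<times> (nat \<times> nat) set) set" where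
  "hooked_pairs n k i = {(Q1, Q2). hooked_placement n Q1 \<and> hooked_placement n Q2 \<and>
     card Q1 + k = n \<and> card Q2 + k = n \<and> Qminus Q1 = Qminus Q2 \<and> card (Qminus Q1) = i \<and>
     pry Q1 = pry Q2}"

lemma mem_hooked_pairs:
  "(Q1, Q2) \<in> hooked_pairs n k i \<longleftrightarrow> hooked_placement n Q1 \<and> hooked_placement n Q2 \<and>
     card Q1 + k = n \<and> card Q2 + k = n \<and> Qminus Q1 = Qminus Q2 \<and> card (Qminus Q1) = i \<and>
     pry Q1 = pry Q2"
  unfolding hooked_pairs_def by simp

lemma finite_hooked_pairs: "finite (hooked_pairs n k i)"
proof (rule finite_subset)
  show "hooked_pairs n k i \<subseteq> Pow ({1..n} \<times> {1..n}) \<times> Pow ({1..n} \<times> {1..n})"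
    unfolding hooked_pairs_def hooked_placement_def by auto
qed auto

lemma hooked_pairs_0: "hooked_pairs 0 k i = (if k = 0 \<and> i = 0 then {({}, {})} else {})"
proof -
  have empty: "hooked_placement 0 Q \<longleftrightarrow> Q = {}" for Q
    unfolding hooked_placement_def by (cases "Q = {}") (simp_all add: hooked_def)
  have "(Q1, Q2) \<in> hooked_pairs 0 k i \<longleftrightarrow> Q1 = {} \<and> Q2 = {} \<and> k = 0 \<and> i = 0" for Q1 Q2
    by (auto simp: mem_hooked_pairs empty Qminus_def)
  then show ?thesis by auto
qed

lemma hooked_pairs_top_row_shared:
  "(Q1, Q2) \<in> hooked_pairs m k i \<Longrightarrow> (m, b) \<in> Q1 \<longleftrightarrow> (m, b) \<in> Q2"
  by (metis hooked_placement_top_row_in_Qminus mem_hooked_pairs)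

lemma hooked_pairs_insert_top_column:
  assumes "(Q1, Q2) \<in> hooked_pairs n k i"
    and a1: "a1 \<in> {1..n} - fst ` Q1" and a2: "a2 \<in> {1..n} - fst ` Q2"
  shows "(insert (a1, Suc n) Q1, insert (a2, Suc n) Q2) \<in> hooked_pairs (Suc n) k i"
proof -
  have Q: "hooked_placement n Q1" "hooked_placement n Q2"
    using assms(1) by (simp_all add: mem_hooked_pairs)
  have "(a1, Suc n) \<notin> Q1" "(a2, Suc n) \<notin> Q2" using Q by (force dest: hooked_placement_bounds)+
  with assms Q show ?thesis
    by (auto simp: mem_hooked_pairs hooked_placement_insert_top_column hooked_placement_finite
        Qminus_insert pry_insert)
qed

lemma hooked_pairs_remove_top_column:
  assumes "(Q1, Q2) \<in> hooked_pairs (Suc n) k i"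
    and a1: "(a1, Suc n) \<in> Q1" and a2: "(a2, Suc n) \<in> Q2"
  shows "(Q1 - {(a1, Suc n)}, Q2 - {(a2, Suc n)}) \<in> hooked_pairs n k i"
proof -
  have Q: "hooked_placement (Suc n) Q1" "hooked_placement (Suc n) Q2"
    using assms(1) by (simp_all add: mem_hooked_pairs)
  have "(a1, Suc n) \<notin> Qminus Q1" "(a2, Suc n) \<notin> Qminus Q2"
    using hooked_placement_top_column_free[OF Q(1) a1] hooked_placement_top_column_free[OF Q(2) a2]
    by (auto simp: Qminus_def)
  moreover have "card Q1 > 0" "card Q2 > 0"
    using a1 a2 hooked_placement_finite[OF Q(1)] hooked_placement_finite[OF Q(2)] card_gt_0_iff
    by blast+
  moreover have "inj_on snd Q1" "inj_on snd Q2" using Q unfolding hooked_placement_def by auto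
  ultimately show ?thesis
    using assms hooked_placement_remove_top[OF Q(1) a1] hooked_placement_remove_top[OF Q(2) a2]
    by (auto simp: mem_hooked_pairs Qminus_Diff pry_Diff_singleton hooked_placement_finite)
qed

lemma hooked_pairs_insert_top_row:
  assumes "(Q1, Q2) \<in> hooked_pairs n k i" and b: "b \<in> {1..n} - snd ` Q1"
  shows "(insert (Suc n, b) Q1, insert (Suc n, b) Q2) \<in> hooked_pairs (Suc n) k (Suc i)"
proof -
  have Q: "hooked_placement n Q1" "hooked_placement n Q2" and pry: "pry Q1 = pry Q2"
    using assms(1) by (simp_all add: mem_hooked_pairs)
  have b2: "b \<in> {1..n} - snd ` Q2" using b pry unfolding pry_def by simp
  have "(Suc n, b) \<notin> Q1" "(Suc n, b) \<notin> Q2" using Q by (force dest: hooked_placement_bounds)+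
  moreover from this have "(Suc n, b) \<notin> Qminus Q1" using Qminus_subset by blast
  moreover have "finite (Qminus Q1)" using hooked_placement_finite_Qminus[OF Q(1)] .
  ultimately show ?thesis
    using assms b2 Q
    by (auto simp: mem_hooked_pairs hooked_placement_insert_top_row hooked_placement_finite
        Qminus_insert pry_insert)
qed

lemma hooked_pairs_remove_top_row:
  assumes "(Q1, Q2) \<in> hooked_pairs (Suc n) k (Suc i)" and b: "(Suc n, b) \<in> Q1"
  shows "(Q1 - {(Suc n, b)}, Q2 - {(Suc n, b)}) \<in> hooked_pairs n k i"
proof -
  have Q: "hooked_placement (Suc n) Q1" "hooked_placement (Suc n) Q2"
    using assms(1) by (simp_all add: mem_hooked_pairs)
  have b2: "(Suc n, b) \<in> Q2" using hooked_pairs_top_row_shared[OF assms(1)] b by blast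
  have "(Suc n, b) \<in> Qminus Q1" using hooked_placement_top_row_in_Qminus[OF Q(1)] b by blast
  moreover have "finite (Qminus Q1)" using hooked_placement_finite_Qminus[OF Q(1)] .
  moreover have "card Q1 > 0" "card Q2 > 0"
    using b b2 hooked_placement_finite[OF Q(1)] hooked_placement_finite[OF Q(2)] card_gt_0_iff
    by blast+
  moreover have "inj_on snd Q1" "inj_on snd Q2" using Q unfolding hooked_placement_def by auto
  ultimately show ?thesis
    using assms b2 hooked_placement_remove_top[OF Q(1) b] hooked_placement_remove_top[OF Q(2) b2]
    by (auto simp: mem_hooked_pairs Qminus_Diff pry_Diff_singleton hooked_placement_finite)
qed

lemma hooked_pairs_avoiding_top:
  "{p \<in> hooked_pairs (Suc n) k i. Suc n \<notin> fst ` fst p \<and> Suc n \<notin> snd ` fst p} =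
     (if k = 0 then {} else hooked_pairs n (k - 1) i)"
proof (intro set_eqI iffI)
  fix p assume "p \<in> {p \<in> hooked_pairs (Suc n) k i. Suc n \<notin> fst ` fst p \<and> Suc n \<notin> snd ` fst p}"
  then obtain Q1 Q2 where p: "p = (Q1, Q2)" and A: "(Q1, Q2) \<in> hooked_pairs (Suc n) k i"
    and top: "Suc n \<notin> fst ` Q1" "Suc n \<notin> snd ` Q1"
    by (cases p) simp
  have "Suc n \<notin> fst ` Q2"
  proof
    assume "Suc n \<in> fst ` Q2"
    then obtain b where "(Suc n, b) \<in> Q2" by force
    then show False using top hooked_pairs_top_row_shared[OF A, of b] by force
  qed
  moreover have "Suc n \<notin> snd ` Q2" using A top by (metis mem_hooked_pairs pry_def)
  ultimately have "hooked_placement n Q1" "hooked_placement n Q2"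
    using A top hooked_placement_Suc_avoiding_iff[of n Q1]
      hooked_placement_Suc_avoiding_iff[of n Q2]
    by (simp_all add: mem_hooked_pairs)
  with A show "p \<in> (if k = 0 then {} else hooked_pairs n (k - 1) i)"
    using hooked_placement_card_le[of n Q1] by (auto simp: p mem_hooked_pairs)
next
  fix p assume "p \<in> (if k = 0 then {} else hooked_pairs n (k - 1) i)"
  then obtain Q1 Q2 where p: "p = (Q1, Q2)" and "0 < k" and B: "(Q1, Q2) \<in> hooked_pairs n (k - 1) i"
    by (cases p) (simp split: if_splits)
  then have "hooked_placement n Q1" "hooked_placement n Q2" by (simp_all add: mem_hooked_pairs)
  then have "hooked_placement (Suc n) Q1 \<and> Suc n \<notin> fst ` Q1 \<and> Suc n \<notin> snd ` Q1"
    "hooked_placement (Suc n) Q2"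
    using hooked_placement_Suc_avoiding_iff[of n Q1] hooked_placement_Suc_avoiding_iff[of n Q2]
    by simp_all
  moreover have "card Q1 + k = Suc n" "card Q2 + k = Suc n"
    using B \<open>0 < k\<close> by (auto simp: mem_hooked_pairs)
  ultimately show "p \<in> {p \<in> hooked_pairs (Suc n) k i. Suc n \<notin> fst ` fst p \<and> Suc n \<notin> snd ` fst p}"
    using B unfolding p mem_Collect_eq mem_hooked_pairs fst_conv by argo
qed

lemma hooked_pairs_top_column_eq_image:
  "{p \<in> hooked_pairs (Suc n) k i. Suc n \<in> snd ` fst p} =
     (\<lambda>((Q1, Q2), (a1, a2)). (insert (a1, Suc n) Q1, insert (a2, Suc n) Q2)) `
       Sigma (hooked_pairs n k i) (\<lambda>(Q1, Q2). ({1..n} - fst ` Q1) \<times> ({1..n} - fst ` Q2))"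
  (is "?B = ?f ` ?D")
proof (intro equalityI subsetI)
  fix p assume "p \<in> ?B"
  then obtain Q1 Q2 where p: "p = (Q1, Q2)" "(Q1, Q2) \<in> hooked_pairs (Suc n) k i"
    and top: "Suc n \<in> snd ` Q1" by (cases p) simp
  then obtain a1 where a1: "(a1, Suc n) \<in> Q1" by (auto simp: image_iff)
  have "Suc n \<in> snd ` Q2" using top p(2) by (metis mem_hooked_pairs pry_def)
  then obtain a2 where a2: "(a2, Suc n) \<in> Q2" by (auto simp: image_iff)
  have Q: "hooked_placement (Suc n) Q1" "hooked_placement (Suc n) Q2"
    using p(2) by (simp_all add: mem_hooked_pairs)
  have "((Q1 - {(a1, Suc n)}, Q2 - {(a2, Suc n)}), (a1, a2)) \<in> ?D"
    using hooked_pairs_remove_top_column[OF p(2) a1 a2]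
      hooked_placement_top_column_free[OF Q(1) a1] hooked_placement_top_column_free[OF Q(2) a2]
    by simp
  moreover have "?f ((Q1 - {(a1, Suc n)}, Q2 - {(a2, Suc n)}), (a1, a2)) = p"
    using a1 a2 by (simp add: p insert_absorb)
  ultimately show "p \<in> ?f ` ?D" by force
next
  fix p assume "p \<in> ?f ` ?D"
  then obtain Q1 Q2 a1 a2 where "(Q1, Q2) \<in> hooked_pairs n k i"
    "a1 \<in> {1..n} - fst ` Q1" "a2 \<in> {1..n} - fst ` Q2" "p = ?f ((Q1, Q2), (a1, a2))"
    by auto
  then show "p \<in> ?B" using hooked_pairs_insert_top_column by simp
qed

lemma card_hooked_pairs_top_column:
  "card {p \<in> hooked_pairs (Suc n) k i. Suc n \<in> snd ` fst p} = k * k * card (hooked_pairs n k i)"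
proof -
  define D where
    "D = Sigma (hooked_pairs n k i) (\<lambda>(Q1, Q2). ({1..n} - fst ` Q1) \<times> ({1..n} - fst ` Q2))"
  define f where
    "f = (\<lambda>((Q1, Q2), (a1 :: nat, a2 :: nat)). (insert (a1, Suc n) Q1, insert (a2, Suc n) Q2))"
  have "inj_on f D"
  proof (rule inj_onI)
    fix x y assume D: "x \<in> D" "y \<in> D" and "f x = f y"
    obtain Q1 Q2 a1 a2 R1 R2 b1 b2 where xy: "x = ((Q1, Q2), (a1, a2))" "y = ((R1, R2), (b1, b2))"
      by (metis prod.collapse)
    have P: "hooked_placement n Q1" "hooked_placement n Q2"
      "hooked_placement n R1" "hooked_placement n R2"
      using D by (simp_all add: xy D_def mem_hooked_pairs)
    have e: "insert (a1, Suc n) Q1 = insert (b1, Suc n) R1"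
      "insert (a2, Suc n) Q2 = insert (b2, Suc n) R2"
      using \<open>f x = f y\<close> by (simp_all add: xy f_def)
    show "x = y"
      using hooked_placement_insert_outside_inj[OF P(1,3) e(1)]
        hooked_placement_insert_outside_inj[OF P(2,4) e(2)]
      by (simp add: xy)
  qed
  moreover have "card (({1..n} - fst ` Q1) \<times> ({1..n} - fst ` Q2)) = k * k"
    if "(Q1, Q2) \<in> hooked_pairs n k i" for Q1 Q2
    using that card_free_lines(1) by (auto simp: mem_hooked_pairs card_cartesian_product)
  ultimately show ?thesis
    unfolding hooked_pairs_top_column_eq_image f_def[symmetric] D_def[symmetric]
    by (auto simp: D_def intro!: card_image_Sigma_const_fibres finite_hooked_pairs)
qed

lemma hooked_pairs_top_row_eq_image:
  "{p \<in> hooked_pairs (Suc n) k (Suc i). Suc n \<in> fst ` fst p} =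
     (\<lambda>((Q1, Q2), b). (insert (Suc n, b) Q1, insert (Suc n, b) Q2)) `
       Sigma (hooked_pairs n k i) (\<lambda>(Q1, Q2). {1..n} - snd ` Q1)"
  (is "?C = ?f ` ?D")
proof (intro equalityI subsetI)
  fix p assume "p \<in> ?C"
  then obtain Q1 Q2 where p: "p = (Q1, Q2)" "(Q1, Q2) \<in> hooked_pairs (Suc n) k (Suc i)"
    and top: "Suc n \<in> fst ` Q1" by (cases p) simp
  then obtain b where b: "(Suc n, b) \<in> Q1" by (auto simp: image_iff)
  have b2: "(Suc n, b) \<in> Q2" using hooked_pairs_top_row_shared[OF p(2)] b by blast
  have Q1: "hooked_placement (Suc n) Q1" using p(2) by (simp add: mem_hooked_pairs)
  have "((Q1 - {(Suc n, b)}, Q2 - {(Suc n, b)}), b) \<in> ?D"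
    using hooked_pairs_remove_top_row[OF p(2) b] hooked_placement_top_row_free[OF Q1 b] by simp
  moreover have "?f ((Q1 - {(Suc n, b)}, Q2 - {(Suc n, b)}), b) = p"
    using b b2 by (simp add: p insert_absorb)
  ultimately show "p \<in> ?f ` ?D" by force
next
  fix p assume "p \<in> ?f ` ?D"
  then obtain Q1 Q2 b where "(Q1, Q2) \<in> hooked_pairs n k i" "b \<in> {1..n} - snd ` Q1"
    "p = ?f ((Q1, Q2), b)"
    by auto
  then show "p \<in> ?C" using hooked_pairs_insert_top_row by simp
qed

lemma card_hooked_pairs_top_row:
  "card {p \<in> hooked_pairs (Suc n) k (Suc i). Suc n \<in> fst ` fst p} = k * card (hooked_pairs n k i)"
proof -
  define D where "D = Sigma (hooked_pairs n k i) (\<lambda>(Q1, Q2). {1..n} - snd ` Q1)"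
  define f where "f = (\<lambda>((Q1, Q2), b :: nat). (insert (Suc n, b) Q1, insert (Suc n, b) Q2))"
  have "inj_on f D"
  proof (rule inj_onI)
    fix x y assume D: "x \<in> D" "y \<in> D" and "f x = f y"
    obtain Q1 Q2 b R1 R2 c where xy: "x = ((Q1, Q2), b)" "y = ((R1, R2), c)"
      by (metis prod.collapse)
    have P: "hooked_placement n Q1" "hooked_placement n Q2"
      "hooked_placement n R1" "hooked_placement n R2"
      using D by (simp_all add: xy D_def mem_hooked_pairs)
    have e: "insert (Suc n, b) Q1 = insert (Suc n, c) R1"
      "insert (Suc n, b) Q2 = insert (Suc n, c) R2"
      using \<open>f x = f y\<close> by (simp_all add: xy f_def)
    show "x = y"
      using hooked_placement_insert_outside_inj[OF P(1,3) e(1)]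
        hooked_placement_insert_outside_inj[OF P(2,4) e(2)]
      by (simp add: xy)
  qed
  moreover have "card ({1..n} - snd ` Q1) = k" if "(Q1, Q2) \<in> hooked_pairs n k i" for Q1 Q2
    using that card_free_lines(2) by (auto simp: mem_hooked_pairs)
  ultimately show ?thesis
    unfolding hooked_pairs_top_row_eq_image f_def[symmetric] D_def[symmetric]
    by (auto simp: D_def intro!: card_image_Sigma_const_fibres finite_hooked_pairs)
qed

lemma hooked_pairs_no_top_row:
  "{p \<in> hooked_pairs (Suc n) k 0. Suc n \<in> fst ` fst p} = {}"
proof -
  have False if "(Q1, Q2) \<in> hooked_pairs (Suc n) k 0" "(Suc n, b) \<in> Q1" for Q1 Q2 b
  proof -
    have "hooked_placement (Suc n) Q1" "card (Qminus Q1) = 0"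
      using that(1) unfolding mem_hooked_pairs by blast+
    moreover have "finite (Qminus Q1)"
      using hooked_placement_finite_Qminus[OF \<open>hooked_placement (Suc n) Q1\<close>] .
    ultimately show False using hooked_placement_top_row_in_Qminus that(2) by force
  qed
  then show ?thesis by force
qed

lemma card_hooked_pairs_Suc:
  "card (hooked_pairs (Suc n) k i) =
     (if k = 0 then 0 else card (hooked_pairs n (k - 1) i)) + k * k * card (hooked_pairs n k i) +
     (case i of 0 \<Rightarrow> 0 | Suc j \<Rightarrow> k * card (hooked_pairs n k j))"
proof -
  let ?S = "hooked_pairs (Suc n) k i"
  define A where "A = {p \<in> ?S. Suc n \<notin> fst ` fst p \<and> Suc n \<notin> snd ` fst p}"
  define B where "B = {p \<in> ?S. Suc n \<in> snd ` fst p}"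
  define C where "C = {p \<in> ?S. Suc n \<in> fst ` fst p}"
  have "B \<inter> C = {}"
    using hooked_placement_not_both_top by (fastforce simp: B_def C_def mem_hooked_pairs)
  moreover have "?S = A \<union> (B \<union> C)" "A \<inter> (B \<union> C) = {}" by (auto simp: A_def B_def C_def)
  moreover have "finite B" "finite C" "finite A"
    by (simp_all add: A_def B_def C_def finite_hooked_pairs)
  ultimately have "card ?S = card A + (card B + card C)"
    by (simp add: card_Un_disjoint)
  also have "\<dots> = (if k = 0 then 0 else card (hooked_pairs n (k - 1) i)) +
     k * k * card (hooked_pairs n k i) + (case i of 0 \<Rightarrow> 0 | Suc j \<Rightarrow> k * card (hooked_pairs n k j))"
    unfolding A_def B_def C_def
    by (cases i) (simp_all add: hooked_pairs_avoiding_top card_hooked_pairs_top_column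
        card_hooked_pairs_top_row hooked_pairs_no_top_row)
  finally show ?thesis .
qed

lemma JS_eq_0: "n < k \<Longrightarrow> JS n k = 0"
  by (induction n arbitrary: k) auto

lemma coeff_JS_Suc:
  "coeff (JS (Suc n) k) i =
     (if k = 0 then 0 else coeff (JS n (k - 1)) i) +
     int k * (int k * coeff (JS n k) i + (case i of 0 \<Rightarrow> 0 | Suc j \<Rightarrow> coeff (JS n k) j))"
proof (cases "Suc n < k")
  case True
  then show ?thesis by (simp add: JS_eq_0 split: nat.split)
next
  case False
  then show ?thesis by (cases i) (simp_all add: algebra_simps)
qed

lemma coeff_JS_eq_card_hooked_pairs: "coeff (JS n k) i = int (card (hooked_pairs n k i))"
proof (induction n arbitrary: k i)
  case 0
  then show ?case by (simp add: hooked_pairs_0)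
next
  case (Suc n)
  then show ?case
    unfolding coeff_JS_Suc card_hooked_pairs_Suc by (cases i) (simp_all add: algebra_simps)
qed

theorem theorem8:
  fixes n k i :: nat
  assumes "1 \<le> k" and "k \<le> n" and "1 \<le> i" and "i \<le> n - k"
  shows "coeff (JS n k) i =
    int (card {(Q1, Q2). simply_hooked_qperm n k Q1 \<and> simply_hooked_qperm n k Q2 \<and>
                 Qminus Q1 = Qminus Q2 \<and> card (Qminus Q1) = i \<and> card (Qminus Q2) = i \<and>
                 pry Q1 = pry Q2})"
proof -
  have "{(Q1, Q2). simply_hooked_qperm n k Q1 \<and> simply_hooked_qperm n k Q2 \<and>
                 Qminus Q1 = Qminus Q2 \<and> card (Qminus Q1) = i \<and> card (Qminus Q2) = i \<and>
                 pry Q1 = pry Q2} = hooked_pairs n k i"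
    \<comment> \<open>only \<open>k \<le> n\<close> is needed: the count matches the coefficient for all \<open>n, k, i\<close>\<close>
    using \<open>k \<le> n\<close> by (auto simp: hooked_pairs_def simply_hooked_qperm_iff)
  then show ?thesis by (simp add: coeff_JS_eq_card_hooked_pairs)
qed

end
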